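(* Let $\Delta$ be a local derivation of $\mathcal{S}$ such that $\Delta(L_1)=0$ and $\Delta(G_1)=aG_1$ for some $a\in\mathbb{C}$. Then $\Delta(G_1)=0$.
   Context: $\mathcal{S}$ is the centerless super Virasoro algebra: the Lie superalgebra over $\mathbb{C}$ with basis $\{L_m,G_n: m,n\in\mathbb{Z}\}$, $L_m$ even, $G_n$ odd, and brackets $[L_m,L_n]=(m-n)L_{m+n}$, $[L_m,G_r]=(\frac m2-r)G_{m+r}$, $[G_r,G_s]=2L_{r+s}$. A homogeneous linear map $D$ of parity $|D|$ is a derivation if $D([x,y])=[D(x),y]+(-1)^{|D||x|}[x,D(y)]$ for homogeneous $x,y$; derivations are sums of even and odd ones. A linear map $\Delta:\mathcal{S}\to\mathcal{S}$ is a local derivation if for every $x$ there is a derivation $D_x$ with $\Delta(x)=D_x(x)$. *)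

theory Defs
  imports Complex_Main
begin

text \<open>The centerless super Virasoro algebra S.  An element is a pair (f, g) of
finitely supported coefficient functions: x = sum_m f m * L_m + sum_n g n * G_n.\<close>

type_synonym sv = "(int \<Rightarrow> complex) \<times> (int \<Rightarrow> complex)"

definition supp :: "(int \<Rightarrow> complex) \<Rightarrow> int set" where
  "supp f = {m. f m \<noteq> 0}"

definition SV :: "sv set" where
  "SV = {x. finite (supp (fst x)) \<and> finite (supp (snd x))}"

definition sv_zero :: sv where
  "sv_zero = (\<lambda>_. 0, \<lambda>_. 0)"

definition sv_add :: "sv \<Rightarrow> sv \<Rightarrow> sv" where
  "sv_add x y = (\<lambda>k. fst x k + fst y k, \<lambda>k. snd x k + snd y k)"

definition sv_smult :: "complex \<Rightarrow> sv \<Rightarrow> sv" where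
  "sv_smult c x = (\<lambda>k. c * fst x k, \<lambda>k. c * snd x k)"

definition Lb :: "int \<Rightarrow> sv" where
  "Lb m = (\<lambda>k. if k = m then 1 else 0, \<lambda>_. 0)"

definition Gb :: "int \<Rightarrow> sv" where
  "Gb n = (\<lambda>_. 0, \<lambda>k. if k = n then 1 else 0)"

text \<open>Bilinear extension of [L_m,L_n]=(m-n)L_{m+n}, [L_m,G_r]=(m/2-r)G_{m+r},
[G_r,L_m] = -(m/2-r)G_{m+r}, [G_r,G_s]=2L_{r+s}.\<close>
definition br :: "sv \<Rightarrow> sv \<Rightarrow> sv" where
  "br x y =
    (\<lambda>k. (\<Sum>m\<in>supp (fst x). fst x m * fst y (k - m) * of_int (m - (k - m)))
        + 2 * (\<Sum>r\<in>supp (snd x). snd x r * snd y (k - r)),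
     \<lambda>k. (\<Sum>m\<in>supp (fst x). fst x m * snd y (k - m) * (of_int m / 2 - of_int (k - m)))
        - (\<Sum>m\<in>supp (fst y). fst y m * snd x (k - m) * (of_int m / 2 - of_int (k - m))))"

text \<open>Homogeneity: parity False = even (no G-part), True = odd (no L-part).\<close>
definition homog :: "bool \<Rightarrow> sv \<Rightarrow> bool" where
  "homog q x = (if q then fst x = (\<lambda>_. 0) else snd x = (\<lambda>_. 0))"

definition is_linear :: "(sv \<Rightarrow> sv) \<Rightarrow> bool" where
  "is_linear D \<longleftrightarrow> (\<forall>x\<in>SV. D x \<in> SV)
     \<and> (\<forall>x\<in>SV. \<forall>y\<in>SV. D (sv_add x y) = sv_add (D x) (D y))
     \<and> (\<forall>c. \<forall>x\<in>SV. D (sv_smult c x) = sv_smult c (D x))"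

definition hom_derivation :: "bool \<Rightarrow> (sv \<Rightarrow> sv) \<Rightarrow> bool" where
  "hom_derivation p D \<longleftrightarrow> is_linear D
     \<and> (\<forall>q. \<forall>x\<in>SV. homog q x \<longrightarrow> homog (q \<noteq> p) (D x))
     \<and> (\<forall>q. \<forall>x\<in>SV. \<forall>y\<in>SV. homog q x \<longrightarrow>
          D (br x y) = sv_add (br (D x) y)
                         (sv_smult (if p \<and> q then -1 else 1) (br x (D y))))"

definition derivation :: "(sv \<Rightarrow> sv) \<Rightarrow> bool" where
  "derivation D \<longleftrightarrow> (\<exists>D0 D1. hom_derivation False D0 \<and> hom_derivation True D1
       \<and> (\<forall>x\<in>SV. D x = sv_add (D0 x) (D1 x)))"

definition local_derivation :: "(sv \<Rightarrow> sv) \<Rightarrow> bool" where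
  "local_derivation \<Delta> \<longleftrightarrow> is_linear \<Delta>
     \<and> (\<forall>x\<in>SV. \<exists>D. derivation D \<and> \<Delta> x = D x)"

end

theory Submission imports Defs begin

text \<open>Evaluate \<open>\<Delta>\<close> at \<open>x = L\<^sub>1 + c G\<^sub>1\<close> with \<open>c\<^sup>2 = -1/4\<close>.  For an even derivation \<open>D\<^sub>0\<close> the
  \<open>L\<^sub>1\<close>-coefficient of \<open>D\<^sub>0 L\<^sub>1\<close> equals the \<open>G\<^sub>1\<close>-coefficient of \<open>D\<^sub>0 G\<^sub>1\<close>, and for an odd derivation
  \<open>D\<^sub>1\<close> four times the \<open>G\<^sub>1\<close>-coefficient of \<open>D\<^sub>1 L\<^sub>1\<close> is minus the \<open>L\<^sub>1\<close>-coefficient of \<open>D\<^sub>1 G\<^sub>1\<close>; both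
  follow from the Leibniz rule on a few brackets of basis elements.  Together with \<open>c\<^sup>2 = -1/4\<close>
  this forces the \<open>G\<^sub>1\<close>-coefficient of \<open>D x\<close> to be \<open>c\<close> times its \<open>L\<^sub>1\<close>-coefficient for every
  derivation \<open>D\<close>.  But \<open>\<Delta> x = c a G\<^sub>1\<close>, so \<open>c a = 0\<close>.\<close>

lemma supp_indicator [simp]: "supp (\<lambda>k. if k = m then 1 else 0) = {m}"
  by (auto simp: supp_def)

lemma supp_zero [simp]: "supp (\<lambda>_. 0) = {}"
  by (auto simp: supp_def)

lemma sum_supp_eq_single:
  assumes "finite (supp f)" "\<And>m. m \<noteq> a \<Longrightarrow> g m = 0"
  shows "(\<Sum>m\<in>supp f. f m * g m) = f a * g a"
proof (cases "a \<in> supp f")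
  case True
  then show ?thesis using assms by (simp add: sum.remove)
next
  case False
  then have "f a = 0" by (simp add: supp_def)
  moreover have "(\<Sum>m\<in>supp f. f m * g m) = 0"
    by (rule sum.neutral) (use False assms in fastforce)
  ultimately show ?thesis by simp
qed

lemma Lb_SV [simp]: "Lb m \<in> SV"
  by (simp add: SV_def Lb_def)

lemma Gb_SV [simp]: "Gb m \<in> SV"
  by (simp add: SV_def Gb_def)

lemma sv_smult_SV [simp]: "x \<in> SV \<Longrightarrow> sv_smult c x \<in> SV"
  unfolding SV_def sv_smult_def by (auto elim!: finite_subset[rotated] simp: supp_def)

lemma sv_add_SV [simp]:
  assumes "x \<in> SV" "y \<in> SV"
  shows "sv_add x y \<in> SV"
  using assms unfolding SV_def sv_add_def
  by (auto intro: finite_subset[of _ "supp (fst x) \<union> supp (fst y)"]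
                  finite_subset[of _ "supp (snd x) \<union> supp (snd y)"] simp: supp_def)

lemma sv_smult_one [simp]: "sv_smult 1 x = x"
  by (simp add: sv_smult_def)

lemma homog_Lb [simp]: "homog False (Lb m)"
  by (simp add: homog_def Lb_def)

lemma homog_Gb [simp]: "homog True (Gb m)"
  by (simp add: homog_def Gb_def)

lemma br_Lb_left:
  "fst (br (Lb m) y) k = fst y (k - m) * of_int (2 * m - k)"
  "snd (br (Lb m) y) k = snd y (k - m) * (of_int m / 2 - of_int (k - m))"
  by (simp_all add: br_def Lb_def)

lemma br_Gb_left:
  assumes "y \<in> SV"
  shows "fst (br (Gb m) y) k = 2 * snd y (k - m)"
    and "snd (br (Gb m) y) k = - (fst y (k - m) * (of_int (k - m) / 2 - of_int m))"
proof -
  have fin: "finite (supp (fst y))" using assms by (simp add: SV_def)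
  show "fst (br (Gb m) y) k = 2 * snd y (k - m)" by (simp add: br_def Gb_def)
  have "(\<Sum>j\<in>supp (fst y). fst y j * snd (Gb m) (k - j) * (of_int j / 2 - of_int (k - j)))
      = (\<Sum>j\<in>supp (fst y). fst y j * (snd (Gb m) (k - j) * (of_int j / 2 - of_int (k - j))))"
    by (simp add: mult.assoc)
  also have "\<dots> = fst y (k - m) * (snd (Gb m) m * (of_int (k - m) / 2 - of_int m))"
    by (subst sum_supp_eq_single[OF fin, where a = "k - m"]) (auto simp: Gb_def)
  finally show "snd (br (Gb m) y) k = - (fst y (k - m) * (of_int (k - m) / 2 - of_int m))"
    by (simp add: br_def Gb_def)
qed

lemma br_Lb_right:
  assumes "x \<in> SV"
  shows "fst (br x (Lb n)) k = fst x (k - n) * of_int (k - 2 * n)"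
proof -
  have fin: "finite (supp (fst x))" using assms by (simp add: SV_def)
  have "(\<Sum>m\<in>supp (fst x). fst x m * fst (Lb n) (k - m) * of_int (m - (k - m)))
      = (\<Sum>m\<in>supp (fst x). fst x m * (fst (Lb n) (k - m) * of_int (m - (k - m))))"
    by (simp add: mult.assoc)
  also have "\<dots> = fst x (k - n) * (fst (Lb n) n * of_int (k - 2 * n))"
    by (subst sum_supp_eq_single[OF fin, where a = "k - n"]) (auto simp: Lb_def)
  finally show ?thesis by (simp add: br_def Lb_def)
qed

lemma br_Gb_right:
  assumes "x \<in> SV"
  shows "fst (br x (Gb n)) k = 2 * snd x (k - n)"
    and "snd (br x (Gb n)) k = fst x (k - n) * (of_int (k - n) / 2 - of_int n)"
proof -
  have fin: "finite (supp (fst x))" "finite (supp (snd x))" using assms by (auto simp: SV_def)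
  have "(\<Sum>r\<in>supp (snd x). snd x r * snd (Gb n) (k - r)) = snd x (k - n) * snd (Gb n) n"
    by (subst sum_supp_eq_single[OF fin(2), where a = "k - n"]) (auto simp: Gb_def)
  then show "fst (br x (Gb n)) k = 2 * snd x (k - n)"
    by (simp add: br_def Gb_def)
  have "(\<Sum>m\<in>supp (fst x). fst x m * snd (Gb n) (k - m) * (of_int m / 2 - of_int (k - m)))
      = (\<Sum>m\<in>supp (fst x). fst x m * (snd (Gb n) (k - m) * (of_int m / 2 - of_int (k - m))))"
    by (simp add: mult.assoc)
  also have "\<dots> = fst x (k - n) * (snd (Gb n) n * (of_int (k - n) / 2 - of_int n))"
    by (subst sum_supp_eq_single[OF fin(1), where a = "k - n"]) (auto simp: Gb_def)
  finally show "snd (br x (Gb n)) k = fst x (k - n) * (of_int (k - n) / 2 - of_int n)"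
    by (simp add: br_def Gb_def)
qed

lemma br_Lb_Lb: "br (Lb m) (Lb n) = sv_smult (of_int (m - n)) (Lb (m + n))"
  by (rule prod_eqI; rule ext; simp only: br_Lb_left; auto simp: sv_smult_def Lb_def)

lemma br_Lb_Gb: "br (Lb m) (Gb n) = sv_smult (of_int m / 2 - of_int n) (Gb (m + n))"
  by (rule prod_eqI; rule ext; simp only: br_Lb_left; auto simp: sv_smult_def Gb_def)

lemma br_Gb_Gb: "br (Gb m) (Gb n) = sv_smult 2 (Lb (m + n))"
  by (rule prod_eqI; rule ext; simp only: br_Gb_left[OF Gb_SV]; auto simp: sv_smult_def Gb_def Lb_def)

lemma is_linear_SV: "is_linear D \<Longrightarrow> x \<in> SV \<Longrightarrow> D x \<in> SV"
  by (simp add: is_linear_def)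

lemma is_linear_add: "is_linear D \<Longrightarrow> x \<in> SV \<Longrightarrow> y \<in> SV \<Longrightarrow> D (sv_add x y) = sv_add (D x) (D y)"
  by (simp add: is_linear_def)

lemma is_linear_smult: "is_linear D \<Longrightarrow> x \<in> SV \<Longrightarrow> D (sv_smult c x) = sv_smult c (D x)"
  by (simp add: is_linear_def)

lemma hom_derivation_is_linear: "hom_derivation p D \<Longrightarrow> is_linear D"
  unfolding hom_derivation_def by blast

lemma hom_derivation_homog_Lb:
  assumes "hom_derivation p D"
  shows "homog p (D (Lb m))"
proof -
  have "homog (False \<noteq> p) (D (Lb m))"
    using assms Lb_SV homog_Lb unfolding hom_derivation_def by blast
  then show ?thesis by simp
qed

lemma hom_derivation_homog_Gb:
  assumes "hom_derivation p D"
  shows "homog (\<not> p) (D (Gb m))"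
proof -
  have "homog (True \<noteq> p) (D (Gb m))"
    using assms Gb_SV homog_Gb unfolding hom_derivation_def by blast
  then show ?thesis by simp
qed

lemma hom_derivation_Leibniz:
  "hom_derivation p D \<Longrightarrow> x \<in> SV \<Longrightarrow> y \<in> SV \<Longrightarrow> homog q x \<Longrightarrow>
     D (br x y) = sv_add (br (D x) y) (sv_smult (if p \<and> q then -1 else 1) (br x (D y)))"
  unfolding hom_derivation_def by blast

lemma hom_derivation_Lb_Lb:
  assumes D: "hom_derivation p D"
  shows "of_int (m - n) * fst (D (Lb (m + n))) k
           = fst (D (Lb m)) (k - n) * of_int (k - 2 * n) + fst (D (Lb n)) (k - m) * of_int (2 * m - k)"
proof -
  note lin = hom_derivation_is_linear[OF D]
  have "sv_smult (of_int (m - n)) (D (Lb (m + n))) = sv_add (br (D (Lb m)) (Lb n)) (br (Lb m) (D (Lb n)))"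
    using hom_derivation_Leibniz[OF D Lb_SV Lb_SV homog_Lb, of m n]
    by (simp add: br_Lb_Lb is_linear_smult[OF lin])
  from arg_cong[OF this, of "\<lambda>z. fst z k"] show ?thesis
    by (simp add: sv_add_def sv_smult_def br_Lb_left br_Lb_right is_linear_SV[OF lin])
qed

lemma hom_derivation_Lb_Gb:
  assumes D: "hom_derivation p D"
  shows "(of_int m / 2 - of_int n) * fst (D (Gb (m + n))) k
           = 2 * snd (D (Lb m)) (k - n) + fst (D (Gb n)) (k - m) * of_int (2 * m - k)"
proof -
  note lin = hom_derivation_is_linear[OF D]
  have "sv_smult (of_int m / 2 - of_int n) (D (Gb (m + n)))
          = sv_add (br (D (Lb m)) (Gb n)) (br (Lb m) (D (Gb n)))"
    using hom_derivation_Leibniz[OF D Lb_SV Gb_SV homog_Lb, of m n]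
    by (simp add: br_Lb_Gb is_linear_smult[OF lin])
  from arg_cong[OF this, of "\<lambda>z. fst z k"] show ?thesis
    by (simp add: sv_add_def sv_smult_def br_Lb_left br_Gb_right is_linear_SV[OF lin])
qed

lemma hom_derivation_Gb_Gb:
  assumes D: "hom_derivation p D"
  defines "\<sigma> \<equiv> if p then -1 else 1 :: complex"
  shows "2 * fst (D (Lb (m + n))) k = 2 * snd (D (Gb m)) (k - n) + \<sigma> * 2 * snd (D (Gb n)) (k - m)"
    and "2 * snd (D (Lb (m + n))) k = fst (D (Gb m)) (k - n) * (of_int (k - n) / 2 - of_int n)
           - \<sigma> * fst (D (Gb n)) (k - m) * (of_int (k - m) / 2 - of_int m)"
proof -
  note lin = hom_derivation_is_linear[OF D]
  have eq: "sv_smult 2 (D (Lb (m + n))) = sv_add (br (D (Gb m)) (Gb n)) (sv_smult \<sigma> (br (Gb m) (D (Gb n))))"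
    using hom_derivation_Leibniz[OF D Gb_SV Gb_SV homog_Gb, of m n]
    by (simp add: \<sigma>_def br_Gb_Gb is_linear_smult[OF lin])
  from arg_cong[OF eq, of "\<lambda>z. fst z k"]
  show "2 * fst (D (Lb (m + n))) k = 2 * snd (D (Gb m)) (k - n) + \<sigma> * 2 * snd (D (Gb n)) (k - m)"
    by (simp add: sv_add_def sv_smult_def br_Gb_left br_Gb_right is_linear_SV[OF lin])
  from arg_cong[OF eq, of "\<lambda>z. snd z k"]
  show "2 * snd (D (Lb (m + n))) k = fst (D (Gb m)) (k - n) * (of_int (k - n) / 2 - of_int n)
          - \<sigma> * fst (D (Gb n)) (k - m) * (of_int (k - m) / 2 - of_int m)"
    by (simp add: sv_add_def sv_smult_def br_Gb_left br_Gb_right is_linear_SV[OF lin])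
qed

lemma even_derivation_L1_G1:
  assumes D: "hom_derivation False D"
  shows "fst (D (Lb 1)) 1 = snd (D (Gb 1)) 1"
proof -
  have "fst (D (Lb 0)) 0 = 0"
    using hom_derivation_Lb_Lb[OF D, of 0 1 1] by simp
  then have "snd (D (Gb 0)) 0 = 0"
    using hom_derivation_Gb_Gb(1)[OF D, of 0 0 0] by simp
  then show ?thesis
    using hom_derivation_Gb_Gb(1)[OF D, of 1 0 1] by simp
qed

lemma odd_derivation_L1_G1:
  assumes D: "hom_derivation True D"
  shows "4 * snd (D (Lb 1)) 1 = - fst (D (Gb 1)) 1"
proof -
  define r s g\<^sub>0 g\<^sub>1 where "r = snd (D (Lb 1)) 1" and "s = fst (D (Gb 1)) 1"
    and "g\<^sub>0 = fst (D (Gb 0)) 0" and "g\<^sub>1 = fst (D (Gb (-1))) (-1)"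
  have "snd (D (Lb 0)) 0 = 0"
    using hom_derivation_Lb_Gb[OF D, of 0 1 1] by simp
  then have "g\<^sub>1 = s"
    using hom_derivation_Gb_Gb(2)[OF D, of 1 "-1" 0] by (simp add: s_def g\<^sub>1_def field_simps)
  then have B: "3 * g\<^sub>0 = 4 * r + 4 * s"
    using hom_derivation_Lb_Gb[OF D, of 1 "-1" 0] by (simp add: r_def g\<^sub>0_def g\<^sub>1_def field_simps)
  have A: "2 * g\<^sub>0 + 4 * r = s"
    using hom_derivation_Gb_Gb(2)[OF D, of 1 0 1] by (simp add: r_def s_def g\<^sub>0_def field_simps)
  have "5 * (4 * r) = 5 * (- s)"
    using arg_cong2[OF A B, of "\<lambda>u v. 3 * u - 2 * v"] by (simp add: algebra_simps)
  then show ?thesis by (simp add: r_def s_def)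
qed

lemma derivation_L1_plus_G1:
  assumes "derivation D" and c: "c * c = - 1 / 4"
  defines "x \<equiv> sv_add (Lb 1) (sv_smult c (Gb 1))"
  shows "snd (D x) 1 = c * fst (D x) 1"
proof -
  obtain D\<^sub>0 D\<^sub>1 where D\<^sub>0: "hom_derivation False D\<^sub>0" and D\<^sub>1: "hom_derivation True D\<^sub>1"
    and sum: "\<forall>x\<in>SV. D x = sv_add (D\<^sub>0 x) (D\<^sub>1 x)"
    using assms(1) unfolding derivation_def by blast
  define u s where "u = fst (D\<^sub>0 (Lb 1)) 1" and "s = fst (D\<^sub>1 (Gb 1)) 1"
  have "fst (D\<^sub>0 (Gb 1)) 1 = 0" "snd (D\<^sub>0 (Lb 1)) 1 = 0"
    using hom_derivation_homog_Gb[OF D\<^sub>0] hom_derivation_homog_Lb[OF D\<^sub>0] by (simp_all add: homog_def)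
  moreover have "fst (D\<^sub>1 (Lb 1)) 1 = 0" "snd (D\<^sub>1 (Gb 1)) 1 = 0"
    using hom_derivation_homog_Gb[OF D\<^sub>1] hom_derivation_homog_Lb[OF D\<^sub>1] by (simp_all add: homog_def)
  moreover have "D x = sv_add (sv_add (D\<^sub>0 (Lb 1)) (sv_smult c (D\<^sub>0 (Gb 1))))
                              (sv_add (D\<^sub>1 (Lb 1)) (sv_smult c (D\<^sub>1 (Gb 1))))"
    using sum hom_derivation_is_linear[OF D\<^sub>0] hom_derivation_is_linear[OF D\<^sub>1]
    by (simp add: x_def is_linear_add is_linear_smult)
  ultimately have L: "fst (D x) 1 = u + c * s" and G: "snd (D x) 1 = snd (D\<^sub>1 (Lb 1)) 1 + c * u"
    using even_derivation_L1_G1[OF D\<^sub>0] by (simp_all add: u_def s_def sv_add_def sv_smult_def)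
  have "snd (D\<^sub>1 (Lb 1)) 1 = - s / 4"
    using odd_derivation_L1_G1[OF D\<^sub>1] by (simp add: s_def field_simps)
  also have "\<dots> = (c * c) * s"
    using c by simp
  finally have "snd (D x) 1 = c * (u + c * s)"
    using G by (simp add: algebra_simps)
  with L show ?thesis by simp
qed

theorem lemma4p2:
  fixes \<Delta> :: "sv \<Rightarrow> sv" and a :: complex
  assumes "local_derivation \<Delta>"
    and "\<Delta> (Lb 1) = sv_zero"
    and "\<Delta> (Gb 1) = sv_smult a (Gb 1)"
  shows "\<Delta> (Gb 1) = sv_zero"
proof -
  define c :: complex where "c = \<i> / 2"
  have c: "c * c = - 1 / 4" "c \<noteq> 0" by (simp_all add: c_def field_simps)
  define x where "x = sv_add (Lb 1) (sv_smult c (Gb 1))"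
  have "\<Delta> x = sv_add sv_zero (sv_smult c (sv_smult a (Gb 1)))"
    using assms unfolding local_derivation_def by (simp add: x_def is_linear_add is_linear_smult)
  then have "fst (\<Delta> x) 1 = 0" "snd (\<Delta> x) 1 = c * a"
    by (simp_all add: sv_add_def sv_smult_def sv_zero_def Gb_def)
  moreover obtain D where "derivation D" "\<Delta> x = D x"
    using assms(1) unfolding local_derivation_def x_def by (meson Gb_SV Lb_SV sv_add_SV sv_smult_SV)
  ultimately have "c * a = c * 0"
    using derivation_L1_plus_G1[OF _ c(1)] by (simp add: x_def)
  with c(2) show ?thesis
    using assms(3) by (simp add: sv_smult_def sv_zero_def)
qed

end
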